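(* Consider day-ahead prices $\boldsymbol{P}=(P_0,\dots,P_H)$ with $H\ge 2$, a storage of capacity $\kappa>0$ and efficiency $\eta\in(0,1]$, and the admissible bid vectors consisting of the zero vector and the vectors $\vec a(b,s)\in\mathbb{R}^{H+1}$ for hours $b<s$, with $a_b=\kappa/\eta$, $a_s=-\eta\kappa$ and $a_h=0$ otherwise. For a predictive distribution $\mathcal{F}$ of the prices, let $\boldsymbol F\sim\mathcal F$ and let $\mathcal{P}^{\vec a}_{\mathcal F}$ denote the distribution of the forecasted revenue $-\vec a^{\top}\boldsymbol F$. Let $\rho$ be any risk measure that depends on a revenue only through its distribution, and let the battery trading strategy choose $\vec a^*_{\mathcal F}\in\arg\max_{\vec a}\rho(\mathcal{P}^{\vec a}_{\mathcal F})$ (with a fixed tie-breaking rule), with realized revenue $-(\vec a^*_{\mathcal F})^{\top}\vec p$ for realized prices $\vec p$. Then there exist a true distribution $\mathcal F_1$ and a different forecast distribution $\mathcal F_2\neq\mathcal F_1$ such that $\rho(\mathcal{P}^{\vec a}_{\mathcal F_1})=\rho(\mathcal{P}^{\vec a}_{\mathcal F_2})$ for all admissible $\vec a$, so that the ranking of all bid pairs $(b,s)$ and the chosen optimal bid coincide. In particular, the score $S(\mathcal F,\vec p)=(\vec a^*_{\mathcal F})^{\top}\vec p$ (negative realized revenue) is not a strictly proper scoring rule.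
   Context: A scoring rule $S(\mathcal F,x)$ (lower is better) is proper if $\mathbb{E}_{x\sim\mathcal D}[S(\mathcal D,x)]\le\mathbb{E}_{x\sim\mathcal D}[S(\mathcal F,x)]$ for all forecasts $\mathcal F$ and true distributions $\mathcal D$, and strictly proper if equality holds only for $\mathcal F=\mathcal D$. *)

theory Defs
  imports "HOL-Probability.Probability"
begin

definition price_space :: "nat \<Rightarrow> (nat \<Rightarrow> real) measure" where
  "price_space H = PiM {..H} (\<lambda>_. (borel :: real measure))"

definition price_dists :: "nat \<Rightarrow> (nat \<Rightarrow> real) measure set" where
  "price_dists H = {F. prob_space F \<and> sets F = sets (price_space H)}"

definition bid_vec :: "real \<Rightarrow> real \<Rightarrow> nat \<Rightarrow> nat \<Rightarrow> (nat \<Rightarrow> real)" where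
  "bid_vec \<kappa> \<eta> b s = (\<lambda>h. if h = b then \<kappa> / \<eta> else if h = s then - (\<eta> * \<kappa>) else 0)"

definition admissible :: "nat \<Rightarrow> real \<Rightarrow> real \<Rightarrow> (nat \<Rightarrow> real) \<Rightarrow> bool" where
  "admissible H \<kappa> \<eta> a \<longleftrightarrow>
     a = (\<lambda>_. 0) \<or> (\<exists>b s. b < s \<and> s \<le> H \<and> a = bid_vec \<kappa> \<eta> b s)"

definition bid_dot :: "nat \<Rightarrow> (nat \<Rightarrow> real) \<Rightarrow> (nat \<Rightarrow> real) \<Rightarrow> real" where
  "bid_dot H a p = (\<Sum>h\<le>H. a h * p h)"

definition revenue_dist :: "nat \<Rightarrow> (nat \<Rightarrow> real) measure \<Rightarrow> (nat \<Rightarrow> real) \<Rightarrow> real measure" where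
  "revenue_dist H \<F> a = distr \<F> borel (\<lambda>p. - bid_dot H a p)"

text \<open>Optimal bid chosen by the strategy: a fixed selection rule sel (tie-breaking)
  applied to the map a |-> rho(P^a_F).\<close>
definition opt_bid ::
  "nat \<Rightarrow> (real measure \<Rightarrow> real) \<Rightarrow> (((nat \<Rightarrow> real) \<Rightarrow> real) \<Rightarrow> (nat \<Rightarrow> real))
     \<Rightarrow> (nat \<Rightarrow> real) measure \<Rightarrow> (nat \<Rightarrow> real)" where
  "opt_bid H \<rho> sel \<F> = sel (\<lambda>a. \<rho> (revenue_dist H \<F> a))"

text \<open>Score S(F,p) = (a*_F)^T p  (negative realized revenue; lower is better).\<close>
definition battery_score ::
  "nat \<Rightarrow> (real measure \<Rightarrow> real) \<Rightarrow> (((nat \<Rightarrow> real) \<Rightarrow> real) \<Rightarrow> (nat \<Rightarrow> real))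
     \<Rightarrow> (nat \<Rightarrow> real) measure \<Rightarrow> (nat \<Rightarrow> real) \<Rightarrow> real" where
  "battery_score H \<rho> sel \<F> p = bid_dot H (opt_bid H \<rho> sel \<F>) p"

definition proper_on :: "'a measure set \<Rightarrow> ('a measure \<Rightarrow> 'a \<Rightarrow> real) \<Rightarrow> bool" where
  "proper_on C S \<longleftrightarrow> (\<forall>D\<in>C. \<forall>F\<in>C. (\<integral>x. S D x \<partial>D) \<le> (\<integral>x. S F x \<partial>D))"

definition strictly_proper_on :: "'a measure set \<Rightarrow> ('a measure \<Rightarrow> 'a \<Rightarrow> real) \<Rightarrow> bool" where
  "strictly_proper_on C S \<longleftrightarrow> proper_on C S \<and>
     (\<forall>D\<in>C. \<forall>F\<in>C. (\<integral>x. S D x \<partial>D) = (\<integral>x. S F x \<partial>D) \<longrightarrow> F = D)"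

end

theory Submission
  imports Defs
begin

text \<open>Let the prices at hours 0, 1, 2 be fair bits of prescribed parity, and zero at all other
  hours. Whatever the parity, any two of these prices are independent fair bits, and the revenue of
  a bid \<open>a(b,s)\<close> only depends on the prices at hours \<open>b\<close> and \<open>s\<close>. Hence all mixtures of the
  even- and the odd-parity distribution induce the same revenue distribution for every admissible
  bid, although they are pairwise different (they differ in \<open>E[P\<^sub>0 P\<^sub>1 P\<^sub>2]\<close>). There are
  infinitely many such mixtures but only finitely many admissible bids, so two of them lead to the
  same optimal bid and hence to the same score, which is impossible for a strictly proper rule.
  Only the fact that the selection takes values in the finite set of admissible bids is used, not
  that it maximises, nor any property of \<open>\<rho>\<close>, \<open>\<kappa>\<close> or \<open>\<eta>\<close>.\<close>

lemma bid_dot_bid_vec: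
  assumes "b < s" "s \<le> H"
  shows "bid_dot H (bid_vec \<kappa> \<eta> b s) p = \<kappa> / \<eta> * p b - \<eta> * \<kappa> * p s"
proof -
  have "bid_dot H (bid_vec \<kappa> \<eta> b s) p =
      (\<Sum>h\<le>H. (if h = b then \<kappa> / \<eta> * p b else 0) + (if h = s then - (\<eta> * \<kappa>) * p s else 0))"
    unfolding bid_dot_def bid_vec_def using \<open>b < s\<close> by (intro sum.cong) auto
  also have "\<dots> = \<kappa> / \<eta> * p b - \<eta> * \<kappa> * p s"
    using assms by (simp add: sum.distrib)
  finally show ?thesis .
qed

lemma finite_admissible: "finite {a. admissible H \<kappa> \<eta> a}"
proof (rule finite_subset)
  show "{a. admissible H \<kappa> \<eta> a} \<subseteq>
      insert (\<lambda>_. 0) ((\<lambda>(b, s). bid_vec \<kappa> \<eta> b s) ` ({..H} \<times> {..H}))"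
    unfolding admissible_def by force
qed auto

lemma opt_bid_collision:
  fixes F :: "nat \<Rightarrow> (nat \<Rightarrow> real) measure"
  assumes "\<And>g. admissible H \<kappa> \<eta> (sel g)" and "inj F"
  shows "\<exists>n m. F n \<noteq> F m \<and> opt_bid H \<rho> sel (F n) = opt_bid H \<rho> sel (F m)"
proof -
  define bid where "bid n = opt_bid H \<rho> sel (F n)" for n
  have "range bid \<subseteq> {a. admissible H \<kappa> \<eta> a}"
    using assms(1) by (auto simp: bid_def opt_bid_def)
  then have "finite (range bid)"
    using finite_admissible by (rule finite_subset)
  then have "\<not> inj bid"
    using finite_imageD infinite_UNIV_nat by blast
  then obtain n m where "n \<noteq> m" "bid n = bid m"
    unfolding inj_def by blast
  moreover from \<open>n \<noteq> m\<close> have "F n \<noteq> F m"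
    using \<open>inj F\<close> by (auto dest: injD)
  ultimately show ?thesis
    unfolding bid_def by blast
qed

lemma strictly_proper_on_inj_on:
  assumes "strictly_proper_on C S"
  shows "inj_on S C"
proof (rule inj_onI)
  fix F D assume "F \<in> C" "D \<in> C" "S F = S D"
  with assms show "F = D"
    unfolding strictly_proper_on_def by auto
qed

lemma revenue_dist_distr_pmf:
  assumes "v \<in> measurable (measure_pmf P) (price_space H)"
  shows "revenue_dist H (distr (measure_pmf P) (price_space H) v) a =
    distr (measure_pmf (map_pmf (\<lambda>z. - bid_dot H a (v z)) P)) borel (\<lambda>x. x)"
proof -
  have "(\<lambda>p. - bid_dot H a p) \<in> borel_measurable (price_space H)"
    unfolding bid_dot_def price_space_def by measurable
  then have "revenue_dist H (distr (measure_pmf P) (price_space H) v) a =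
      distr (measure_pmf P) borel ((\<lambda>p. - bid_dot H a p) \<circ> v)"
    unfolding revenue_dist_def using assms by (rule distr_distr)
  also have "\<dots> = distr (distr (measure_pmf P) (count_space UNIV) (\<lambda>z. - bid_dot H a (v z)))
      borel (\<lambda>x. x)"
    by (subst distr_distr) (auto simp: comp_def)
  finally show ?thesis
    by (simp add: map_pmf_rep_eq)
qed

lemma map_pmf_pair_pmf_indep_fst:
  assumes "\<And>x. map_pmf (\<lambda>y. f (x, y)) B = C"
  shows "map_pmf f (pair_pmf A B) = C"
  using assms
  by (simp add: pair_pmf_def map_bind_pmf map_pmf_def[symmetric] pmf.map_comp comp_def)

text \<open>With \<open>c\<close> the bits at hours 0, 1, 2 have even parity, otherwise odd parity.\<close>
definition bit_prices :: "nat \<Rightarrow> bool \<Rightarrow> bool \<times> bool \<Rightarrow> nat \<Rightarrow> real" where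
  "bit_prices H c = (\<lambda>(x, y). restrict (\<lambda>h. if h = 0 then of_bool x else if h = 1 then of_bool y
     else if h = 2 then of_bool (x \<noteq> y \<longleftrightarrow> c) else 0) {..H})"

lemma bit_prices_in_space: "bit_prices H c i \<in> space (price_space H)"
  by (auto simp: bit_prices_def price_space_def space_PiM split: prod.splits)

lemma bit_prices_measurable:
  "case_prod (bit_prices H) \<in> measurable (measure_pmf P) (price_space H)"
  using bit_prices_in_space by auto

lemma bit_prices_relabel_two_hours:
  "\<exists>\<sigma>. bij \<sigma> \<and> (\<forall>i. bit_prices H True i h = bit_prices H False (\<sigma> i) h \<and>
                     bit_prices H True i k = bit_prices H False (\<sigma> i) k)"
proof -
  define \<sigma> :: "bool \<times> bool \<Rightarrow> bool \<times> bool" where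
    "\<sigma> = (if 2 \<notin> {h, k} then id else if 0 \<in> {h, k} then apsnd Not else apfst Not)"
  have "\<sigma> \<circ> \<sigma> = id"
    by (auto simp: \<sigma>_def fun_eq_iff)
  then have "bij \<sigma>"
    using o_bij by blast
  moreover have "bit_prices H True i j = bit_prices H False (\<sigma> i) j" if "j \<in> {h, k}" for i j
    using that by (cases i) (auto simp: \<sigma>_def bit_prices_def)
  ultimately show ?thesis by blast
qed

lemma bid_dot_uniform_bit_prices:
  assumes "admissible H \<kappa> \<eta> a"
  shows "map_pmf (\<lambda>i. bid_dot H a (bit_prices H True i)) (pmf_of_set UNIV) =
         map_pmf (\<lambda>i. bid_dot H a (bit_prices H False i)) (pmf_of_set UNIV)"
proof (cases "a = (\<lambda>_. 0)")
  case True
  then show ?thesis by (simp add: bid_dot_def)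
next
  case False
  then obtain b s where bs: "b < s" "s \<le> H" "a = bid_vec \<kappa> \<eta> b s"
    using assms unfolding admissible_def by blast
  obtain \<sigma> where "bij \<sigma>" and \<sigma>: "\<And>i. bit_prices H True i b = bit_prices H False (\<sigma> i) b \<and>
                                     bit_prices H True i s = bit_prices H False (\<sigma> i) s"
    using bit_prices_relabel_two_hours by blast
  have "map_pmf \<sigma> (pmf_of_set UNIV) = pmf_of_set UNIV"
    using \<open>bij \<sigma>\<close> by (simp add: map_pmf_of_set_inj bij_is_inj bij_is_surj)
  moreover have "(\<lambda>i. bid_dot H a (bit_prices H True i)) =
      (\<lambda>i. bid_dot H a (bit_prices H False i)) \<circ> \<sigma>"
    using \<sigma> bs(1,2) unfolding bs(3) by (simp add: bid_dot_bid_vec fun_eq_iff)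
  ultimately show ?thesis
    by (metis pmf.map_comp)
qed

definition price_family :: "nat \<Rightarrow> nat \<Rightarrow> (nat \<Rightarrow> real) measure" where
  "price_family H n =
     distr (measure_pmf (pair_pmf (bernoulli_pmf (1 / (real n + 1))) (pmf_of_set UNIV)))
       (price_space H) (case_prod (bit_prices H))"

lemma price_family_in_price_dists: "price_family H n \<in> price_dists H"
  unfolding price_dists_def price_family_def
  by (auto intro!: measure_pmf.prob_space_distr bit_prices_measurable)

lemma revenue_dist_price_family:
  assumes "admissible H \<kappa> \<eta> a"
  shows "revenue_dist H (price_family H n) a =
    distr (measure_pmf (map_pmf (\<lambda>i. - bid_dot H a (bit_prices H False i)) (pmf_of_set UNIV)))
      borel (\<lambda>x. x)"
proof -
  have "map_pmf (\<lambda>i. - bid_dot H a (bit_prices H c i)) (pmf_of_set UNIV) =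
        map_pmf (\<lambda>i. - bid_dot H a (bit_prices H False i)) (pmf_of_set UNIV)" for c
    using arg_cong[where f = "map_pmf uminus", OF bid_dot_uniform_bit_prices[OF assms]]
    by (cases c) (simp_all add: pmf.map_comp comp_def)
  then show ?thesis
    unfolding price_family_def revenue_dist_distr_pmf[OF bit_prices_measurable]
    by (subst map_pmf_pair_pmf_indep_fst) auto
qed

lemma price_family_triple_moment:
  assumes "H \<ge> 2"
  shows "(\<integral>p. p 0 * p 1 * p 2 \<partial>price_family H n) = (1 - 1 / (real n + 1)) / 4"
proof -
  define Q where
    "Q = pair_pmf (bernoulli_pmf (1 / (real n + 1))) (pmf_of_set (UNIV :: (bool \<times> bool) set))"
  define t :: "(nat \<Rightarrow> real) \<Rightarrow> real" where "t p = p 0 * p 1 * p 2" for p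
  have "t \<in> borel_measurable (price_space H)"
    unfolding t_def price_space_def using assms
    by (intro borel_measurable_times measurable_component_singleton) auto
  then have "(\<integral>p. t p \<partial>price_family H n) = (\<integral>z. t (case_prod (bit_prices H) z) \<partial>Q)"
    unfolding price_family_def Q_def by (rule integral_distr[OF bit_prices_measurable])
  also have "(\<lambda>z. t (case_prod (bit_prices H) z)) = indicator {(False, True, True)}"
  proof
    fix z :: "bool \<times> bool \<times> bool"
    show "t (case_prod (bit_prices H) z) = indicator {(False, True, True)} z"
      using assms by (cases z) (auto simp: t_def bit_prices_def)
  qed
  also have "(\<integral>z. indicator {(False, True, True)} z \<partial>Q) = pmf Q (False, True, True)"
    by (simp add: measure_pmf_single)
  also have "\<dots> = (1 - 1 / (real n + 1)) / 4"
    by (simp add: Q_def pmf_pair)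
  finally show ?thesis
    unfolding t_def .
qed

lemma inj_price_family:
  assumes "H \<ge> 2"
  shows "inj (price_family H)"
proof (rule injI)
  fix n m assume "price_family H n = price_family H m"
  then have "(1 - 1 / (real n + 1)) / 4 = (1 - 1 / (real m + 1)) / 4"
    using price_family_triple_moment[OF assms, of n] price_family_triple_moment[OF assms, of m]
    by simp
  then show "n = m"
    by (simp add: field_simps)
qed

theorem proposition2:
  fixes H :: nat and \<kappa> \<eta> :: real
    and \<rho> :: "real measure \<Rightarrow> real"
    and sel :: "((nat \<Rightarrow> real) \<Rightarrow> real) \<Rightarrow> (nat \<Rightarrow> real)"
  assumes "H \<ge> 2" and "\<kappa> > 0" and "0 < \<eta>" and "\<eta> \<le> 1"
    and sel_adm: "\<And>g. admissible H \<kappa> \<eta> (sel g)"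
    and sel_max: "\<And>g a. admissible H \<kappa> \<eta> a \<Longrightarrow> g a \<le> g (sel g)"
  shows "\<exists>F1 F2. F1 \<in> price_dists H \<and> F2 \<in> price_dists H \<and> F1 \<noteq> F2 \<and>
           (\<forall>a. admissible H \<kappa> \<eta> a \<longrightarrow>
                 \<rho> (revenue_dist H F1 a) = \<rho> (revenue_dist H F2 a)) \<and>
           opt_bid H \<rho> sel F1 = opt_bid H \<rho> sel F2 \<and>
           \<not> strictly_proper_on (price_dists H) (battery_score H \<rho> sel)"
proof -
  obtain n m where "price_family H n \<noteq> price_family H m"
    and same_bid: "opt_bid H \<rho> sel (price_family H n) = opt_bid H \<rho> sel (price_family H m)"
    using opt_bid_collision[where sel = sel and \<rho> = \<rho>, OF sel_adm inj_price_family[OF \<open>H \<ge> 2\<close>]]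
    by blast
  have "battery_score H \<rho> sel (price_family H n) = battery_score H \<rho> sel (price_family H m)"
    using same_bid unfolding battery_score_def by simp
  then have "\<not> inj_on (battery_score H \<rho> sel) (price_dists H)"
    using \<open>price_family H n \<noteq> price_family H m\<close> price_family_in_price_dists inj_onD by metis
  then have "\<not> strictly_proper_on (price_dists H) (battery_score H \<rho> sel)"
    using strictly_proper_on_inj_on by blast
  moreover have "\<rho> (revenue_dist H (price_family H n) a) = \<rho> (revenue_dist H (price_family H m) a)"
    if "admissible H \<kappa> \<eta> a" for a
    using revenue_dist_price_family[OF that] by simp
  ultimately show ?thesis
    using price_family_in_price_dists \<open>price_family H n \<noteq> price_family H m\<close> same_bid by blast
qed

end
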